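(* Let $m\ge 2$ and suppose there exist mutually unbiased equiangular tight frames $(v_1,\dots,v_k)$ and $(w_1,\dots,w_l)$ for $\mathbb{R}^m$. Then $$\lambda(m,k+l)\ \ge\ \frac{m-\delta_{m,k}\,\delta_{m,l}}{2\sqrt{m}-\delta_{m,k}-\delta_{m,l}},$$ where for integers $n\ge m$, $\delta_{m,n}:=\frac{m}{n}\left(1+\sqrt{\frac{(n-1)(n-m)}{m}}\right)$.
   Context: For a real Banach space $X$ and finite-dimensional subspace $Y$, a projection onto $Y$ is a bounded linear $P:X\to Y$ with $P|_Y=\mathrm{Id}_Y$; the relative projection constant is $\lambda(Y,X)=\inf\{\|P\|: P \text{ a projection from } X \text{ onto } Y\}$. For integers $n\ge m$, the maximal relative projection constant is $\lambda(m,n):=\sup\{\lambda(Y,\ell_\infty^{(n)}): Y\subset \ell_\infty^{(n)},\ \dim Y=m\}$, where $\ell_\infty^{(n)}$ is $\mathbb{R}^n$ with the max norm. A system of unit vectors $(v_1,\dots,v_n)$ in $\mathbb{R}^m$ is an equiangular tight frame if $|\langle v_i,v_j\rangle|$ is the same constant for all $i\ne j$ and $VV^\top=\frac{n}{m}\mathrm{I}_m$, where $V$ has columns $v_1,\dots,v_n$. Two equiangular tight frames $(v_1,\dots,v_k)$ and $(w_1,\dots,w_l)$ for $\mathbb{R}^m$ are mutually unbiased if there is $c\in\mathbb{R}$ with $|\langle v_i,w_j\rangle|=c$ for all $i,j$. *)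

theory Defs
  imports "HOL-Analysis.Analysis"
begin

text \<open>Vectors of R^n are represented as functions nat => real vanishing outside {0..<n};
  n x n (resp. n x m) matrices as functions nat => nat => real (entries outside range ignored).\<close>

definition vecs :: "nat \<Rightarrow> (nat \<Rightarrow> real) set" where
  "vecs n = {x. \<forall>i\<ge>n. x i = 0}"

definition matvec :: "nat \<Rightarrow> nat \<Rightarrow> (nat \<Rightarrow> nat \<Rightarrow> real) \<Rightarrow> (nat \<Rightarrow> real) \<Rightarrow> (nat \<Rightarrow> real)" where
  "matvec r c A x = (\<lambda>i. if i < r then (\<Sum>j<c. A i j * x j) else 0)"

definition linf :: "nat \<Rightarrow> (nat \<Rightarrow> real) \<Rightarrow> real" where
  "linf n x = Max (insert 0 {\<bar>x i\<bar> | i. i < n})"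

definition is_subspace_dim :: "nat \<Rightarrow> nat \<Rightarrow> (nat \<Rightarrow> real) set \<Rightarrow> bool" where
  "is_subspace_dim n m Y \<longleftrightarrow> (\<exists>B. Y = matvec n m B ` vecs m \<and> inj_on (matvec n m B) (vecs m))"

definition is_projection :: "nat \<Rightarrow> (nat \<Rightarrow> real) set \<Rightarrow> (nat \<Rightarrow> nat \<Rightarrow> real) \<Rightarrow> bool" where
  "is_projection n Y P \<longleftrightarrow> (\<forall>x\<in>vecs n. matvec n n P x \<in> Y) \<and> (\<forall>y\<in>Y. matvec n n P y = y)"

definition opnorm_inf :: "nat \<Rightarrow> (nat \<Rightarrow> nat \<Rightarrow> real) \<Rightarrow> real" where
  "opnorm_inf n P = Sup {linf n (matvec n n P x) | x. x \<in> vecs n \<and> linf n x \<le> 1}"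

definition rel_proj_const :: "nat \<Rightarrow> (nat \<Rightarrow> real) set \<Rightarrow> real" where
  "rel_proj_const n Y = Inf {opnorm_inf n P | P. is_projection n Y P}"

definition max_rel_proj_const :: "nat \<Rightarrow> nat \<Rightarrow> real" where
  "max_rel_proj_const m n = Sup {rel_proj_const n Y | Y. is_subspace_dim n m Y}"

definition is_ETF :: "nat \<Rightarrow> (nat \<Rightarrow> real ^ 'm) \<Rightarrow> bool" where
  "is_ETF k v \<longleftrightarrow>
     (\<forall>i<k. norm (v i) = 1) \<and>
     (\<exists>c. \<forall>i<k. \<forall>j<k. i \<noteq> j \<longrightarrow> \<bar>v i \<bullet> v j\<bar> = c) \<and>
     (\<chi> a b. \<Sum>i<k. v i $ a * v i $ b) = (real k / real CARD('m)) *\<^sub>R (mat 1 :: real ^ 'm ^ 'm)"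

definition mutually_unbiased :: "nat \<Rightarrow> (nat \<Rightarrow> real ^ 'm) \<Rightarrow> nat \<Rightarrow> (nat \<Rightarrow> real ^ 'm) \<Rightarrow> bool" where
  "mutually_unbiased k v l w \<longleftrightarrow> (\<exists>c. \<forall>i<k. \<forall>j<l. \<bar>v i \<bullet> w j\<bar> = c)"

definition delta :: "nat \<Rightarrow> nat \<Rightarrow> real" where
  "delta m n = real m / real n * (1 + sqrt (real (n - 1) * (real n - real m) / real m))"

end

theory Submission
  imports Defs
begin

text \<open>Let \<open>a\<close> be the concatenation of the two frames and \<open>Y\<close> the range of its analysis
  operator \<open>x \<mapsto> (a i \<bullet> x)\<^sub>i\<close>, an \<open>m\<close>-dimensional subspace of \<open>\<ell>\<^sub>\<infinity>\<^sup>n\<close>, \<open>n = k + l\<close>.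
  For a projection \<open>P\<close> onto \<open>Y\<close> and a test matrix \<open>X i j = \<lambda>\<^sub>i sgn (a i \<bullet> a j)\<close>, the
  pairing \<open>\<Sum> P i j X i j\<close> is at most \<open>\<parallel>P\<parallel> \<Sum> \<lambda>\<^sub>i\<close>; if moreover every column of \<open>X\<close>
  reproduces the frame, \<open>\<Sum>\<^sub>i X i j a i = \<mu> a j\<close>, the pairing equals \<open>\<mu> tr P = \<mu> m\<close>.
  Equiangularity and mutual unbiasedness make \<open>\<bar>a i \<bullet> a j\<bar>\<close> constant on each of the four
  blocks, so the signs reproduce each frame up to a scalar, and the weights
  \<open>\<lambda> = (\<surd>m - \<delta>(m, l)) / k\<close> on the first and \<open>(\<surd>m - \<delta>(m, k)) / l\<close> on the second frame
  make the two scalars agree, with \<open>\<mu> m = m - \<delta>(m, k) \<delta>(m, l)\<close> and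
  \<open>\<Sum> \<lambda>\<^sub>i = 2 \<surd>m - \<delta>(m, k) - \<delta>(m, l)\<close>. The supremum defining \<open>\<lambda>(m, n)\<close> is finite
  because orthogonal projections have norm at most \<open>n\<close>.\<close>

definition analysis_op :: "nat \<Rightarrow> (nat \<Rightarrow> 'a::real_inner) \<Rightarrow> 'a \<Rightarrow> nat \<Rightarrow> real" where
  "analysis_op n b x = (\<lambda>i. if i < n then b i \<bullet> x else 0)"

lemma analysis_op_inj_eqI:
  assumes "inj (analysis_op n b)" and "\<And>i. i < n \<Longrightarrow> b i \<bullet> x = b i \<bullet> y"
  shows "x = y"
proof -
  have "analysis_op n b x = analysis_op n b y"
    using assms(2) by (auto simp: analysis_op_def)
  then show ?thesis
    using assms(1) by (simp add: inj_eq)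
qed

section \<open>Coordinates of finite-dimensional vectors\<close>

definition vec_of_coords :: "(nat \<Rightarrow> real) \<Rightarrow> real ^ 'a::finite" where
  "vec_of_coords z = (\<chi> a. z (to_nat_on UNIV a))"

definition coords_of_vec :: "real ^ 'a::finite \<Rightarrow> nat \<Rightarrow> real" where
  "coords_of_vec x = (\<lambda>r. if r < CARD('a) then x $ from_nat_into UNIV r else 0)"

lemma to_nat_on_UNIV_bij: "bij_betw (to_nat_on (UNIV :: 'a::finite set)) UNIV {..<CARD('a)}"
  by (rule to_nat_on_finite) simp

lemma to_nat_on_UNIV_image: "to_nat_on (UNIV :: 'a::finite set) ` UNIV = {..<CARD('a)}"
  using to_nat_on_UNIV_bij by (auto simp: bij_betw_def)

lemma to_nat_on_UNIV_less: "to_nat_on (UNIV :: 'a::finite set) a < CARD('a)"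
  using to_nat_on_UNIV_image by blast

lemma vec_of_coords_of_vec [simp]: "vec_of_coords (coords_of_vec x) = x"
  by (simp add: coords_of_vec_def vec_of_coords_def vec_eq_iff countable_finite to_nat_on_UNIV_less)

lemma vec_of_coords_bij:
  "bij_betw (vec_of_coords :: _ \<Rightarrow> real ^ 'a::finite) (vecs CARD('a)) UNIV"
proof (rule bij_betw_byWitness[where f' = coords_of_vec])
  show "\<forall>z\<in>vecs CARD('a). coords_of_vec (vec_of_coords z :: real ^ 'a) = z"
    by (auto simp: coords_of_vec_def vec_of_coords_def vecs_def to_nat_on_UNIV_image fun_eq_iff)
  show "coords_of_vec ` (UNIV :: (real ^ 'a) set) \<subseteq> vecs CARD('a)"
    by (auto simp: coords_of_vec_def vecs_def)
qed simp_all

lemma matvec_eq_analysis_op_vec_of_coords: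
  "matvec n CARD('a) B
     = analysis_op n (\<lambda>i. vec_of_coords (B i)) \<circ> (vec_of_coords :: _ \<Rightarrow> real ^ 'a::finite)"
proof (rule ext)
  fix z
  have "(\<Sum>r<CARD('a). B i r * z r) = vec_of_coords (B i) \<bullet> (vec_of_coords z :: real ^ 'a)" for i
    using sum.reindex_bij_betw[OF to_nat_on_UNIV_bij[where 'a='a], of "\<lambda>r. B i r * z r"]
    by (simp add: vec_of_coords_def inner_vec_def)
  then show "matvec n CARD('a) B z
      = (analysis_op n (\<lambda>i. vec_of_coords (B i)) \<circ> (vec_of_coords :: _ \<Rightarrow> real ^ 'a)) z"
    unfolding matvec_def analysis_op_def comp_def by (simp only:)
qed

lemma is_subspace_dim_iff_analysis_range:
  "is_subspace_dim n CARD('a) Y \<longleftrightarrow>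
     (\<exists>b :: nat \<Rightarrow> real ^ 'a::finite. Y = range (analysis_op n b) \<and> inj (analysis_op n b))"
proof -
  have image: "matvec n CARD('a) B ` vecs CARD('a) = range (analysis_op n b)"
    and inj: "inj_on (matvec n CARD('a) B) (vecs CARD('a)) \<longleftrightarrow> inj (analysis_op n b)"
    if "b = (\<lambda>i. vec_of_coords (B i))" for B and b :: "nat \<Rightarrow> real ^ 'a"
  proof -
    have onto: "(vec_of_coords :: _ \<Rightarrow> real ^ 'a) ` vecs CARD('a) = UNIV"
      and inj_coords: "inj_on (vec_of_coords :: _ \<Rightarrow> real ^ 'a) (vecs CARD('a))"
      using vec_of_coords_bij[where 'a='a] by (auto simp: bij_betw_def)
    show "matvec n CARD('a) B ` vecs CARD('a) = range (analysis_op n b)"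
      by (simp only: that matvec_eq_analysis_op_vec_of_coords image_comp[symmetric] onto)
    show "inj_on (matvec n CARD('a) B) (vecs CARD('a)) \<longleftrightarrow> inj (analysis_op n b)"
      by (simp only: that matvec_eq_analysis_op_vec_of_coords comp_inj_on_iff[OF inj_coords, symmetric] onto)
  qed
  have rows: "(\<lambda>i. vec_of_coords (coords_of_vec (b i))) = b" for b :: "nat \<Rightarrow> real ^ 'a"
    by simp
  show ?thesis
    unfolding is_subspace_dim_def
    using image inj rows by metis
qed

section \<open>The norms of \<open>\<ell>\<^sub>\<infinity>\<^sup>n\<close> and of its operators\<close>

lemma abs_le_linf: "i < n \<Longrightarrow> \<bar>x i\<bar> \<le> linf n x"
  unfolding linf_def by (rule Max_ge) auto

lemma linf_nonneg: "0 \<le> linf n x"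
  unfolding linf_def by (rule Max_ge) auto

lemma linf_le: "0 \<le> M \<Longrightarrow> (\<And>i. i < n \<Longrightarrow> \<bar>x i\<bar> \<le> M) \<Longrightarrow> linf n x \<le> M"
  unfolding linf_def by (subst Max_le_iff) auto

lemma linf_matvec_le:
  assumes "linf n x \<le> 1" and "0 \<le> M" and rows: "\<And>i. i < n \<Longrightarrow> (\<Sum>j<n. \<bar>P i j\<bar>) \<le> M"
  shows "linf n (matvec n n P x) \<le> M"
proof (rule linf_le[OF \<open>0 \<le> M\<close>])
  fix i assume i: "i < n"
  have "\<bar>matvec n n P x i\<bar> \<le> (\<Sum>j<n. \<bar>P i j * x j\<bar>)"
    using i by (simp add: matvec_def sum_abs)
  also have "\<dots> \<le> (\<Sum>j<n. \<bar>P i j\<bar>)"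
  proof (rule sum_mono)
    fix j assume "j \<in> {..<n}"
    then have "\<bar>x j\<bar> \<le> 1"
      using abs_le_linf[of j n x] assms(1) by simp
    then show "\<bar>P i j * x j\<bar> \<le> \<bar>P i j\<bar>"
      by (simp add: abs_mult mult_left_le)
  qed
  also have "\<dots> \<le> M"
    by (rule rows[OF i])
  finally show "\<bar>matvec n n P x i\<bar> \<le> M" .
qed

lemma opnorm_inf_set_bdd_above:
  "bdd_above {linf n (matvec n n P x) | x. x \<in> vecs n \<and> linf n x \<le> 1}"
proof (rule bdd_aboveI)
  have rows: "(\<Sum>j<n. \<bar>P i j\<bar>) \<le> (\<Sum>i<n. \<Sum>j<n. \<bar>P i j\<bar>)" if "i < n" for i
    using that by (intro member_le_sum) (auto simp: sum_nonneg)
  fix y assume "y \<in> {linf n (matvec n n P x) | x. x \<in> vecs n \<and> linf n x \<le> 1}"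
  then show "y \<le> (\<Sum>i<n. \<Sum>j<n. \<bar>P i j\<bar>)"
    using linf_matvec_le[OF _ _ rows] by (auto simp: sum_nonneg)
qed

lemma zero_in_opnorm_inf_set:
  "linf n (matvec n n P (\<lambda>_. 0)) \<in> {linf n (matvec n n P x) | x. x \<in> vecs n \<and> linf n x \<le> 1}"
proof -
  have "linf n (\<lambda>_. 0) \<le> 1"
    by (rule linf_le) auto
  then show ?thesis
    by (auto simp: vecs_def)
qed

lemma opnorm_inf_nonneg: "0 \<le> opnorm_inf n P"
  unfolding opnorm_inf_def
  using cSup_upper[OF zero_in_opnorm_inf_set opnorm_inf_set_bdd_above] linf_nonneg
  by (rule order_trans[rotated])

lemma row_sum_le_opnorm_inf:
  assumes i: "i < n"
  shows "(\<Sum>j<n. \<bar>P i j\<bar>) \<le> opnorm_inf n P"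
proof -
  define x where "x j = (if j < n then sgn (P i j) else 0)" for j
  have x: "x \<in> vecs n" "linf n x \<le> 1"
    by (auto simp: x_def vecs_def abs_sgn_eq intro!: linf_le)
  have "(\<Sum>j<n. \<bar>P i j\<bar>) = matvec n n P x i"
    using i by (simp add: matvec_def x_def abs_sgn[symmetric])
  also have "\<dots> \<le> linf n (matvec n n P x)"
    using abs_le_linf[OF i] by (rule order_trans[OF abs_ge_self])
  also have "\<dots> \<le> opnorm_inf n P"
    unfolding opnorm_inf_def using x by (intro cSup_upper[OF _ opnorm_inf_set_bdd_above]) blast
  finally show ?thesis .
qed

lemma opnorm_inf_le:
  assumes "0 \<le> M" and "\<And>i. i < n \<Longrightarrow> (\<Sum>j<n. \<bar>P i j\<bar>) \<le> M"
  shows "opnorm_inf n P \<le> M"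
  unfolding opnorm_inf_def
proof (rule cSup_least)
  show "{linf n (matvec n n P x) | x. x \<in> vecs n \<and> linf n x \<le> 1} \<noteq> {}"
    using zero_in_opnorm_inf_set by blast
  fix y assume "y \<in> {linf n (matvec n n P x) | x. x \<in> vecs n \<and> linf n x \<le> 1}"
  then show "y \<le> M"
    using linf_matvec_le[OF _ assms] by auto
qed

lemma le_rel_proj_const:
  assumes "\<exists>P. is_projection n Y P" and "\<And>P. is_projection n Y P \<Longrightarrow> c \<le> opnorm_inf n P"
  shows "c \<le> rel_proj_const n Y"
  unfolding rel_proj_const_def using assms by (auto intro!: cInf_greatest)

section \<open>Projections onto the range of an analysis operator\<close>

lemma projection_onto_analysis_range:
  fixes b :: "nat \<Rightarrow> 'a::real_inner"
  assumes inj: "inj (analysis_op n b)" and proj: "is_projection n (range (analysis_op n b)) P"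
  obtains z where "\<And>i j. i < n \<Longrightarrow> j < n \<Longrightarrow> P i j = b i \<bullet> z j"
    and "\<And>x. (\<Sum>j<n. (b j \<bullet> x) *\<^sub>R z j) = x"
proof -
  define e where "e j = (\<lambda>r. if r = j then 1 else 0 :: real)" for j :: nat
  have "e j \<in> vecs n" if "j < n" for j
    using that by (simp add: e_def vecs_def)
  then have "\<forall>j. \<exists>y. j < n \<longrightarrow> matvec n n P (e j) = analysis_op n b y"
    using proj unfolding is_projection_def by blast
  then obtain z where z: "\<And>j. j < n \<Longrightarrow> matvec n n P (e j) = analysis_op n b (z j)"
    by metis
  have entries: "P i j = b i \<bullet> z j" if "i < n" "j < n" for i j
    using fun_cong[OF z[OF that(2)], of i] that
    by (simp add: matvec_def analysis_op_def e_def if_distrib cong: if_cong)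
  have reconstruction: "(\<Sum>j<n. (b j \<bullet> x) *\<^sub>R z j) = x" for x
  proof (rule analysis_op_inj_eqI[OF inj])
    fix i assume i: "i < n"
    have "matvec n n P (analysis_op n b x) i = analysis_op n b x i"
      using proj unfolding is_projection_def by auto
    then show "b i \<bullet> (\<Sum>j<n. (b j \<bullet> x) *\<^sub>R z j) = b i \<bullet> x"
      using i entries by (simp add: matvec_def analysis_op_def inner_sum_right mult.commute)
  qed
  show ?thesis
    using entries reconstruction by (rule that)
qed

lemma sum_inner_eq_DIM_if_reconstruction:
  fixes b z :: "nat \<Rightarrow> 'a::euclidean_space"
  assumes "\<And>x. (\<Sum>j<n. (b j \<bullet> x) *\<^sub>R z j) = x"
  shows "(\<Sum>j<n. b j \<bullet> z j) = DIM('a)"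
proof -
  have "(\<Sum>j<n. b j \<bullet> z j) = (\<Sum>j<n. \<Sum>e\<in>Basis. (b j \<bullet> e) * (z j \<bullet> e))"
    by (rule sum.cong[OF refl]) (rule euclidean_inner)
  also have "\<dots> = (\<Sum>e\<in>Basis. (\<Sum>j<n. (b j \<bullet> e) *\<^sub>R z j) \<bullet> e)"
    by (subst sum.swap) (simp add: inner_sum_left)
  also have "\<dots> = (\<Sum>e\<in>(Basis :: 'a set). e \<bullet> e)"
    by (simp only: assms)
  also have "\<dots> = DIM('a)"
    by simp
  finally show ?thesis .
qed

lemma sum_entries_mult_le_opnorm_inf:
  assumes "\<And>i j. i < n \<Longrightarrow> j < n \<Longrightarrow> \<bar>X i j\<bar> \<le> M i"
  shows "(\<Sum>i<n. \<Sum>j<n. P i j * X i j) \<le> opnorm_inf n P * (\<Sum>i<n. M i)"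
proof -
  have "(\<Sum>j<n. P i j * X i j) \<le> M i * opnorm_inf n P" if i: "i < n" for i
  proof -
    have "P i j * X i j \<le> \<bar>P i j\<bar> * M i" if "j < n" for j
      using abs_ge_self[of "P i j * X i j"] mult_left_mono[OF assms[OF i that] abs_ge_zero[of "P i j"]]
      by (simp add: abs_mult)
    then have "(\<Sum>j<n. P i j * X i j) \<le> (\<Sum>j<n. \<bar>P i j\<bar> * M i)"
      by (intro sum_mono) simp
    also have "\<dots> = M i * (\<Sum>j<n. \<bar>P i j\<bar>)"
      by (simp add: sum_distrib_left mult.commute)
    also have "\<dots> \<le> M i * opnorm_inf n P"
      using assms[OF i i] by (intro mult_left_mono row_sum_le_opnorm_inf[OF i]) linarith
    finally show ?thesis .
  qed
  then have "(\<Sum>i<n. \<Sum>j<n. P i j * X i j) \<le> (\<Sum>i<n. M i * opnorm_inf n P)"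
    by (intro sum_mono) simp
  then show ?thesis
    by (simp add: sum_distrib_left mult.commute)
qed

lemma projection_norm_lower_bound:
  fixes b :: "nat \<Rightarrow> 'a::euclidean_space"
  assumes inj: "inj (analysis_op n b)" and proj: "is_projection n (range (analysis_op n b)) P"
    and bound: "\<And>i j. i < n \<Longrightarrow> j < n \<Longrightarrow> \<bar>X i j\<bar> \<le> M i"
    and columns: "\<And>j. j < n \<Longrightarrow> (\<Sum>i<n. X i j *\<^sub>R b i) = \<mu> *\<^sub>R b j"
  shows "\<mu> * DIM('a) \<le> opnorm_inf n P * (\<Sum>i<n. M i)"
proof -
  obtain z where entries: "\<And>i j. i < n \<Longrightarrow> j < n \<Longrightarrow> P i j = b i \<bullet> z j"
    and reconstruction: "\<And>x. (\<Sum>j<n. (b j \<bullet> x) *\<^sub>R z j) = x"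
    using projection_onto_analysis_range[OF inj proj] by blast
  have "(\<Sum>i<n. \<Sum>j<n. P i j * X i j) = (\<Sum>j<n. (\<Sum>i<n. X i j *\<^sub>R b i) \<bullet> z j)"
    by (subst sum.swap) (simp add: entries inner_sum_left mult.commute)
  also have "\<dots> = \<mu> * (\<Sum>j<n. b j \<bullet> z j)"
    by (simp add: columns sum_distrib_left)
  also have "\<dots> = \<mu> * DIM('a)"
    by (simp add: sum_inner_eq_DIM_if_reconstruction[OF reconstruction])
  finally show ?thesis
    using sum_entries_mult_le_opnorm_inf[of n X M P, OF bound] by simp
qed

definition frame_op :: "nat \<Rightarrow> (nat \<Rightarrow> 'a::real_inner) \<Rightarrow> 'a \<Rightarrow> 'a" where
  "frame_op n b x = (\<Sum>r<n. (b r \<bullet> x) *\<^sub>R b r)"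

lemma linear_frame_op: "linear (frame_op n b)"
  by (rule linearI)
    (simp_all add: frame_op_def inner_add_right scaleR_add_left sum.distrib scaleR_sum_right)

lemma frame_op_self_adjoint: "frame_op n b x \<bullet> y = x \<bullet> frame_op n b y"
  by (simp add: frame_op_def inner_sum_left inner_sum_right inner_commute mult.commute)

lemma frame_op_inverse:
  fixes b :: "nat \<Rightarrow> 'a::euclidean_space"
  assumes inj: "inj (analysis_op n b)"
  obtains R where "\<And>x. R (frame_op n b x) = x" and "\<And>x. frame_op n b (R x) = x"
    and "\<And>x y. x \<bullet> R y = R x \<bullet> y"
proof -
  have "frame_op n b x = 0 \<Longrightarrow> x = 0" for x
  proof -
    assume "frame_op n b x = 0"
    moreover have "x \<bullet> frame_op n b x = (\<Sum>r<n. (b r \<bullet> x)\<^sup>2)"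
      by (simp add: frame_op_def inner_sum_right power2_eq_square inner_commute)
    ultimately have "(\<Sum>r<n. (b r \<bullet> x)\<^sup>2) = 0"
      by simp
    then have "b r \<bullet> x = b r \<bullet> 0" if "r < n" for r
      using that by (simp add: sum_nonneg_eq_0_iff)
    then show "x = 0"
      by (rule analysis_op_inj_eqI[OF inj])
  qed
  then have "inj (frame_op n b)"
    by (simp add: linear_injective_0[OF linear_frame_op])
  then obtain R where left: "\<And>x. R (frame_op n b x) = x" and right: "\<And>x. frame_op n b (R x) = x"
    using linear_injective_isomorphism[OF linear_frame_op _ refl] by blast
  have "x \<bullet> R y = R x \<bullet> y" for x y
  proof -
    have "x \<bullet> R y = frame_op n b (R x) \<bullet> R y"
      by (simp only: right)
    also have "\<dots> = R x \<bullet> frame_op n b (R y)"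
      by (rule frame_op_self_adjoint)
    finally show ?thesis
      by (simp only: right)
  qed
  with left right show ?thesis
    by (rule that)
qed

lemma symmetric_idempotent_entry_bound:
  fixes P :: "nat \<Rightarrow> nat \<Rightarrow> real"
  assumes sym: "\<And>i j. P i j = P j i"
    and idem: "\<And>i j. (\<Sum>r<n. P i r * P r j) = P i j"
    and "i < n" "j < n"
  shows "\<bar>P i j\<bar> \<le> 1"
proof -
  have "P i r * P r i = (P i r)\<^sup>2" for r
    by (simp add: sym[of r i] power2_eq_square)
  then have diag: "P i i = (\<Sum>r<n. (P i r)\<^sup>2)"
    using idem[of i i] by simp
  have "(P i i)\<^sup>2 \<le> (\<Sum>r<n. (P i r)\<^sup>2)" and "(P i j)\<^sup>2 \<le> (\<Sum>r<n. (P i r)\<^sup>2)"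
    using assms(3,4) by (auto intro: member_le_sum)
  then have "(P i i)\<^sup>2 \<le> P i i" and off: "(P i j)\<^sup>2 \<le> P i i"
    by (simp_all only: diag[symmetric])
  then have "P i i \<le> 1"
    using mult_le_cancel_left[of "P i i" "P i i" 1] by (auto simp: power2_eq_square)
  with off have "(P i j)\<^sup>2 \<le> 1"
    by linarith
  then show ?thesis
    by (simp add: abs_square_le_1)
qed

lemma analysis_range_projection:
  fixes b :: "nat \<Rightarrow> 'a::euclidean_space"
  assumes inj: "inj (analysis_op n b)"
  obtains P where "is_projection n (range (analysis_op n b)) P" and "opnorm_inf n P \<le> n"
proof -
  obtain R where left: "\<And>x. R (frame_op n b x) = x" and right: "\<And>x. frame_op n b (R x) = x"
    and self_adjoint: "\<And>x y. x \<bullet> R y = R x \<bullet> y"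
    using frame_op_inverse[OF inj] by blast
  define P where "P i j = b i \<bullet> R (b j)" for i j
  have matvec: "matvec n n P x = analysis_op n b (R (\<Sum>j<n. x j *\<^sub>R b j))" for x
  proof
    fix i
    have "(\<Sum>j<n. P i j * x j) = b i \<bullet> R (\<Sum>j<n. x j *\<^sub>R b j)"
      by (simp add: P_def self_adjoint[of "b i"] inner_sum_right mult.commute)
    then show "matvec n n P x i = analysis_op n b (R (\<Sum>j<n. x j *\<^sub>R b j)) i"
      by (simp add: matvec_def analysis_op_def)
  qed
  have "is_projection n (range (analysis_op n b)) P"
    unfolding is_projection_def
  proof (intro conjI ballI)
    fix y assume "y \<in> range (analysis_op n b)"
    then obtain x where "y = analysis_op n b x" by blast
    moreover have "(\<Sum>j<n. analysis_op n b x j *\<^sub>R b j) = frame_op n b x"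
      by (simp add: analysis_op_def frame_op_def)
    ultimately show "matvec n n P y = y"
      by (simp add: matvec left)
  qed (simp add: matvec)
  moreover have "opnorm_inf n P \<le> n"
  proof (rule opnorm_inf_le)
    have sym: "P i j = P j i" for i j
      unfolding P_def using self_adjoint[of "b i" "b j"] by (simp add: inner_commute)
    have idem: "(\<Sum>r<n. P i r * P r j) = P i j" for i j
    proof -
      have "(\<Sum>r<n. P i r * P r j) = R (b i) \<bullet> frame_op n b (R (b j))"
        by (simp add: P_def self_adjoint[of "b i"] frame_op_def inner_sum_right inner_commute mult.commute)
      also have "\<dots> = P i j"
        by (simp add: right P_def self_adjoint[of "b i" "b j"])
      finally show ?thesis .
    qed
    have "\<bar>P i j\<bar> \<le> 1" if "i < n" "j < n" for i j
      using symmetric_idempotent_entry_bound[of P n, OF sym idem that] .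
    then show "(\<Sum>j<n. \<bar>P i j\<bar>) \<le> n" if "i < n" for i
      using that sum_mono[of "{..<n}" "\<lambda>j. \<bar>P i j\<bar>" "\<lambda>_. 1"] by simp
  qed simp
  ultimately show ?thesis
    by (rule that)
qed

lemma rel_proj_const_le:
  assumes "is_subspace_dim n CARD('a::finite) Y"
  shows "rel_proj_const n Y \<le> n"
proof -
  obtain b :: "nat \<Rightarrow> real ^ 'a" where Y: "Y = range (analysis_op n b)" and inj: "inj (analysis_op n b)"
    using assms is_subspace_dim_iff_analysis_range by blast
  obtain P where P: "is_projection n Y P" "opnorm_inf n P \<le> n"
    using analysis_range_projection[OF inj] Y by blast
  have "rel_proj_const n Y \<le> opnorm_inf n P"
    unfolding rel_proj_const_def
    using P opnorm_inf_nonneg by (intro cInf_lower bdd_belowI[where m = 0]) auto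
  with P show ?thesis
    by simp
qed

lemma rel_proj_const_le_max_rel_proj_const:
  assumes "is_subspace_dim n CARD('a::finite) Y"
  shows "rel_proj_const n Y \<le> max_rel_proj_const CARD('a) n"
  unfolding max_rel_proj_const_def
  using assms rel_proj_const_le[where 'a = 'a]
  by (intro cSup_upper bdd_aboveI[where M = "real n"]) auto

section \<open>Equiangular tight frames\<close>

lemma etf_frame_op:
  fixes v :: "nat \<Rightarrow> real ^ 'm::finite"
  assumes "is_ETF k v"
  shows "frame_op k v x = (real k / CARD('m)) *\<^sub>R x"
proof -
  have gram: "(\<Sum>i<k. v i $ a * v i $ b) = (if a = b then real k / CARD('m) else 0)" for a b
  proof -
    have "(\<chi> a b. \<Sum>i<k. v i $ a * v i $ b) $ a $ b = ((real k / CARD('m)) *\<^sub>R (mat 1 :: real ^ 'm ^ 'm)) $ a $ b"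
      using assms unfolding is_ETF_def by simp
    then show ?thesis
      by (simp add: mat_def)
  qed
  have "frame_op k v x $ a = (\<Sum>b\<in>UNIV. (\<Sum>i<k. v i $ a * v i $ b) * x $ b)" for a
  proof -
    have "frame_op k v x $ a = (\<Sum>i<k. \<Sum>b\<in>UNIV. v i $ a * v i $ b * x $ b)"
      by (simp add: frame_op_def sum_component inner_vec_def sum_distrib_left sum_distrib_right mult_ac)
    also have "\<dots> = (\<Sum>b\<in>UNIV. (\<Sum>i<k. v i $ a * v i $ b) * x $ b)"
      by (subst sum.swap) (simp add: sum_distrib_right)
    finally show ?thesis .
  qed
  then show ?thesis
    by (simp add: vec_eq_iff gram if_distrib[of "\<lambda>t. t * _"] cong: if_cong)
qed

lemma etf_sum_inner_sq:
  fixes v :: "nat \<Rightarrow> real ^ 'm::finite"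
  assumes "is_ETF k v"
  shows "(\<Sum>i<k. (v i \<bullet> x)\<^sup>2) = real k / CARD('m) * (x \<bullet> x)"
proof -
  have "(\<Sum>i<k. (v i \<bullet> x)\<^sup>2) = x \<bullet> frame_op k v x"
    by (simp add: frame_op_def inner_sum_right power2_eq_square inner_commute)
  then show ?thesis
    by (simp add: etf_frame_op[OF assms])
qed

lemma etf_angle:
  fixes v :: "nat \<Rightarrow> real ^ 'm::finite"
  assumes etf: "is_ETF k v" and "1 \<le> k"
  obtains c where "0 \<le> c" and "\<And>i j. i < k \<Longrightarrow> j < k \<Longrightarrow> i \<noteq> j \<Longrightarrow> \<bar>v i \<bullet> v j\<bar> = c"
    and "(real k - 1) * c\<^sup>2 = real k / CARD('m) - 1"
proof -
  obtain c where c: "\<And>i j. i < k \<Longrightarrow> j < k \<Longrightarrow> i \<noteq> j \<Longrightarrow> \<bar>v i \<bullet> v j\<bar> = c"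
    using etf unfolding is_ETF_def by blast
  then have abs_c: "\<And>i j. i < k \<Longrightarrow> j < k \<Longrightarrow> i \<noteq> j \<Longrightarrow> \<bar>v i \<bullet> v j\<bar> = \<bar>c\<bar>"
    by (metis abs_abs)
  obtain k' where k: "k = Suc k'"
    using \<open>1 \<le> k\<close> by (cases k) auto
  have "v 0 \<bullet> v 0 = 1"
    using etf k unfolding is_ETF_def by (simp add: norm_eq_1)
  moreover have "(\<Sum>i<k'. (v (Suc i) \<bullet> v 0)\<^sup>2) = (\<Sum>i<k'. c\<^sup>2)"
  proof (rule sum.cong[OF refl])
    fix i assume "i \<in> {..<k'}"
    then have "\<bar>v (Suc i) \<bullet> v 0\<bar> = c"
      using c k by simp
    then show "(v (Suc i) \<bullet> v 0)\<^sup>2 = c\<^sup>2"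
      by (metis power2_abs)
  qed
  moreover have "(\<Sum>i<k. (v i \<bullet> v 0)\<^sup>2) = (v 0 \<bullet> v 0)\<^sup>2 + (\<Sum>i<k'. (v (Suc i) \<bullet> v 0)\<^sup>2)"
    unfolding k by (rule sum.lessThan_Suc_shift)
  ultimately have "1 + k' * c\<^sup>2 = real k / CARD('m)"
    using etf_sum_inner_sq[OF etf, of "v 0"] by simp
  then have "(real k - 1) * \<bar>c\<bar>\<^sup>2 = real k / CARD('m) - 1"
    using k by simp
  with abs_c show ?thesis
    by (intro that[of "\<bar>c\<bar>"]) simp_all
qed

lemma etf_card_le:
  fixes v :: "nat \<Rightarrow> real ^ 'm::finite"
  assumes "is_ETF k v" and "1 \<le> k"
  shows "CARD('m) \<le> k"
proof -
  obtain c where "0 \<le> c" and "\<And>i j. i < k \<Longrightarrow> j < k \<Longrightarrow> i \<noteq> j \<Longrightarrow> \<bar>v i \<bullet> v j\<bar> = c"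
    and "(real k - 1) * c\<^sup>2 = real k / CARD('m) - 1"
    using etf_angle[OF assms] by blast
  moreover have "0 \<le> (real k - 1) * c\<^sup>2"
    using \<open>1 \<le> k\<close> by simp
  ultimately have "1 \<le> real k / CARD('m)"
    by linarith
  then show ?thesis
    by (simp add: le_divide_eq)
qed

lemma delta_eq:
  assumes "0 \<le> c" and "(real k - 1) * c\<^sup>2 = real k / real m - 1" and "1 \<le> k" and "0 < m"
  shows "delta m k = real m / real k * (1 + (real k - 1) * c)"
proof -
  have "real (k - 1) * (real k - real m) / real m = (real k - 1) * (real k / real m - 1)"
    using assms(3,4) by (simp add: of_nat_diff field_simps)
  also have "\<dots> = ((real k - 1) * c)\<^sup>2"
    by (simp only: assms(2)[symmetric]) (simp add: power2_eq_square)
  finally show ?thesis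
    using assms(1,3) by (simp add: delta_def)
qed

lemma delta_le_sqrt:
  assumes "1 \<le> m" and "m \<le> k"
  shows "delta m k \<le> sqrt m"
proof -
  define s where "s = sqrt m"
  define r where "r = sqrt (real (k - 1) * (real k - real m) / real m)"
  have m: "real m = s\<^sup>2" "1 \<le> s"
    using assms(1) by (simp_all add: s_def)
  have "0 \<le> r" and "real m * r\<^sup>2 = (real k - 1) * (real k - real m)"
    using assms by (simp_all add: r_def of_nat_diff)
  then have r2: "(real m * r)\<^sup>2 = real m * ((real k - 1) * (real k - real m))"
    by (metis power2_eq_square mult.assoc mult.left_commute)
  have "real k \<le> s * k"
    using mult_right_mono[OF m(2), of "real k"] by simp
  then have u: "0 \<le> s * k - m"
    using assms(2) by linarith
  have "(s * k - m)\<^sup>2 - (m * r)\<^sup>2 = s\<^sup>2 * k * (s - 1)\<^sup>2"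
    by (simp only: r2) (simp add: m(1) power2_eq_square algebra_simps)
  moreover have "0 \<le> s\<^sup>2 * k * (s - 1)\<^sup>2"
    by simp
  ultimately have "(m * r)\<^sup>2 \<le> (s * k - m)\<^sup>2"
    by linarith
  then have "m * r \<le> s * k - m"
    using u by (rule power2_le_imp_le)
  moreover have "delta m k = m * (1 + r) / k"
    by (simp add: delta_def r_def)
  ultimately show ?thesis
    using assms by (simp add: s_def divide_le_eq algebra_simps)
qed

text \<open>With \<open>c\<close> the common angle, \<open>sgn (v i \<bullet> v j) = (v i \<bullet> v j) / c\<close> off the diagonal;
  for an orthonormal basis (\<open>c = 0\<close>) this still holds because \<open>x / 0 = 0\<close>.\<close>
lemma etf_sgn_sum:
  fixes v :: "nat \<Rightarrow> real ^ 'm::finite"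
  assumes etf: "is_ETF k v" and j: "j < k"
  shows "(\<Sum>i<k. sgn (v i \<bullet> v j) *\<^sub>R v i) = (real k * delta CARD('m) k / CARD('m)) *\<^sub>R v j"
proof -
  have "1 \<le> k"
    using j by simp
  obtain c where "0 \<le> c" and c: "\<And>i j. i < k \<Longrightarrow> j < k \<Longrightarrow> i \<noteq> j \<Longrightarrow> \<bar>v i \<bullet> v j\<bar> = c"
    and angle: "(real k - 1) * c\<^sup>2 = real k / CARD('m) - 1"
    using etf_angle[OF etf \<open>1 \<le> k\<close>] by blast
  have vj: "v j \<bullet> v j = 1"
    using etf j unfolding is_ETF_def by (simp add: norm_eq_1)
  have sgn_eq: "sgn (v i \<bullet> v j) = (v i \<bullet> v j) / c" if "i < k" "i \<noteq> j" for i
    using c[OF that(1) j that(2)] mult_sgn_abs[of "v i \<bullet> v j"]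
    by (cases "c = 0") (auto simp: eq_divide_eq)
  have "sgn (v i \<bullet> v j) *\<^sub>R v i
      = (1 / c) *\<^sub>R ((v i \<bullet> v j) *\<^sub>R v i) + (if i = j then (1 - 1 / c) *\<^sub>R v j else 0)"
    if "i < k" for i
    using sgn_eq[OF that] vj by (cases "i = j") (simp_all add: algebra_simps)
  then have "(\<Sum>i<k. sgn (v i \<bullet> v j) *\<^sub>R v i)
      = (1 / c) *\<^sub>R frame_op k v (v j) + (1 - 1 / c) *\<^sub>R v j"
    using j by (simp add: sum.distrib frame_op_def scaleR_sum_right)
  also have "\<dots> = (1 + (real k / CARD('m) - 1) / c) *\<^sub>R v j"
    by (simp add: etf_frame_op[OF etf] algebra_simps diff_divide_distrib)
  also have "(real k / CARD('m) - 1) / c = (real k - 1) * c"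
    unfolding angle[symmetric] by (cases "c = 0") (simp_all add: power2_eq_square)
  also have "1 + (real k - 1) * c = real k * delta CARD('m) k / CARD('m)"
    using delta_eq[OF \<open>0 \<le> c\<close> angle \<open>1 \<le> k\<close>] \<open>1 \<le> k\<close> by simp
  finally show ?thesis .
qed

lemma unbiased_sgn_sum:
  fixes w :: "nat \<Rightarrow> real ^ 'm::finite"
  assumes etf: "is_ETF l w" and unbiased: "\<And>i. i < l \<Longrightarrow> \<bar>w i \<bullet> x\<bar> = 1 / sqrt CARD('m)"
  shows "(\<Sum>i<l. sgn (w i \<bullet> x) *\<^sub>R w i) = (real l / sqrt CARD('m)) *\<^sub>R x"
proof -
  have "sgn (w i \<bullet> x) = sqrt CARD('m) * (w i \<bullet> x)" if "i < l" for i
    using mult_sgn_abs[of "w i \<bullet> x"] unbiased[OF that] by (simp add: field_simps)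
  then have "(\<Sum>i<l. sgn (w i \<bullet> x) *\<^sub>R w i) = sqrt CARD('m) *\<^sub>R frame_op l w x"
    by (simp add: frame_op_def scaleR_sum_right)
  also have "\<dots> = (sqrt CARD('m) * (real l / CARD('m))) *\<^sub>R x"
    by (simp add: etf_frame_op[OF etf])
  also have "sqrt CARD('m) * (real l / CARD('m)) = real l / sqrt CARD('m)"
    by (simp add: field_simps)
  finally show ?thesis .
qed

lemma mutually_unbiased_inner:
  fixes v w :: "nat \<Rightarrow> real ^ 'm::finite"
  assumes "is_ETF k v" and etf: "is_ETF l w" and "mutually_unbiased k v l w"
    and "1 \<le> k" and "1 \<le> l" and "i < k" and "j < l"
  shows "\<bar>v i \<bullet> w j\<bar> = 1 / sqrt CARD('m)"
proof -
  obtain c where c: "\<And>i j. i < k \<Longrightarrow> j < l \<Longrightarrow> \<bar>v i \<bullet> w j\<bar> = c"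
    using assms(3) unfolding mutually_unbiased_def by blast
  have "v 0 \<bullet> v 0 = 1"
    using assms(1,4) unfolding is_ETF_def by (simp add: norm_eq_1)
  then have "real l / CARD('m) = (\<Sum>j<l. (w j \<bullet> v 0)\<^sup>2)"
    by (simp add: etf_sum_inner_sq[OF etf])
  also have "\<dots> = (\<Sum>j<l. c\<^sup>2)"
  proof (rule sum.cong[OF refl])
    fix j assume "j \<in> {..<l}"
    then have "\<bar>w j \<bullet> v 0\<bar> = c"
      using c[of 0 j] \<open>1 \<le> k\<close> by (simp add: inner_commute)
    then show "(w j \<bullet> v 0)\<^sup>2 = c\<^sup>2"
      by (metis power2_abs)
  qed
  finally have "c\<^sup>2 = 1 / CARD('m)"
    using \<open>1 \<le> l\<close> by (simp add: field_simps)
  moreover have "0 \<le> c"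
    using c[of 0 0] assms(4,5) by force
  ultimately have "c = 1 / sqrt CARD('m)"
    by (metis real_sqrt_divide real_sqrt_one real_sqrt_unique)
  with c assms(6,7) show ?thesis
    by blast
qed

section \<open>Two mutually unbiased frames\<close>

lemma etf_prefix_analysis_op_inj:
  fixes v a :: "nat \<Rightarrow> real ^ 'm::finite"
  assumes "is_ETF k v" and "1 \<le> k" and "k \<le> n" and "\<And>i. i < k \<Longrightarrow> a i = v i"
  shows "inj (analysis_op n a)"
proof (rule injI)
  fix x y
  assume eq: "analysis_op n a x = analysis_op n a y"
  have "v i \<bullet> x = v i \<bullet> y" if "i < k" for i
    using fun_cong[OF eq, of i] that assms(3,4) by (simp add: analysis_op_def)
  then have "frame_op k v x = frame_op k v y"
    by (simp add: frame_op_def)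
  then show "x = y"
    using assms(1,2) by (simp add: etf_frame_op)
qed

lemma etf_pair_sgn_column:
  fixes v w :: "nat \<Rightarrow> real ^ 'm::finite"
  assumes etf_v: "is_ETF k v" and etf_w: "is_ETF l w"
    and unbiased: "\<And>i i'. i < k \<Longrightarrow> i' < l \<Longrightarrow> \<bar>v i \<bullet> w i'\<bar> = 1 / sqrt CARD('m)"
    and j: "j < k"
  shows "(\<Sum>i<k. (\<alpha> * sgn (v i \<bullet> v j)) *\<^sub>R v i) + (\<Sum>i<l. (\<beta> * sgn (w i \<bullet> v j)) *\<^sub>R w i)
    = (\<alpha> * (real k * delta CARD('m) k / CARD('m)) + \<beta> * (real l / sqrt CARD('m))) *\<^sub>R v j"
proof -
  have "(\<Sum>i<k. (\<alpha> * sgn (v i \<bullet> v j)) *\<^sub>R v i) = \<alpha> *\<^sub>R (\<Sum>i<k. sgn (v i \<bullet> v j) *\<^sub>R v i)"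
    by (simp add: scaleR_sum_right)
  also have "\<dots> = (\<alpha> * (real k * delta CARD('m) k / CARD('m))) *\<^sub>R v j"
    by (simp add: etf_sgn_sum[OF etf_v j])
  finally have v_part: "(\<Sum>i<k. (\<alpha> * sgn (v i \<bullet> v j)) *\<^sub>R v i)
      = (\<alpha> * (real k * delta CARD('m) k / CARD('m))) *\<^sub>R v j" .
  have "(\<Sum>i<l. (\<beta> * sgn (w i \<bullet> v j)) *\<^sub>R w i) = \<beta> *\<^sub>R (\<Sum>i<l. sgn (w i \<bullet> v j) *\<^sub>R w i)"
    by (simp add: scaleR_sum_right)
  also have "\<dots> = (\<beta> * (real l / sqrt CARD('m))) *\<^sub>R v j"
    using unbiased_sgn_sum[OF etf_w, of "v j"] unbiased[OF j] by (simp add: inner_commute)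
  finally have w_part: "(\<Sum>i<l. (\<beta> * sgn (w i \<bullet> v j)) *\<^sub>R w i)
      = (\<beta> * (real l / sqrt CARD('m))) *\<^sub>R v j" .
  from v_part w_part show ?thesis
    by (simp add: scaleR_left_distrib)
qed

lemma etf_delta_le_sqrt:
  fixes v :: "nat \<Rightarrow> real ^ 'm::finite"
  assumes "is_ETF k v" and "1 \<le> k"
  shows "delta CARD('m) k \<le> sqrt CARD('m)"
  by (rule delta_le_sqrt[OF _ etf_card_le[OF assms]]) (simp add: Suc_leI)

lemma sum_lessThan_add_split:
  "(\<Sum>i<k + l. f i) = (\<Sum>i<k. f i) + (\<Sum>i<l. f (k + i))" for k l :: nat
  by (induction l) (simp_all add: add.assoc)

definition concat_frame :: "nat \<Rightarrow> (nat \<Rightarrow> 'a) \<Rightarrow> (nat \<Rightarrow> 'a) \<Rightarrow> nat \<Rightarrow> 'a" where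
  "concat_frame k v w i = (if i < k then v i else w (i - k))"

definition balancing_weight :: "nat \<Rightarrow> nat \<Rightarrow> nat \<Rightarrow> nat \<Rightarrow> real" where
  "balancing_weight m k l i =
     (if i < k then (sqrt m - delta m l) / k else (sqrt m - delta m k) / l)"

lemma balanced_coefficient:
  fixes s m p q d d' :: real
  assumes "s\<^sup>2 = m" and "0 < s" and "p \<noteq> 0" and "q \<noteq> 0"
  shows "(s - d') / p * (p * d / m) + (s - d) / q * (q / s) = (m - d * d') / m"
  unfolding assms(1)[symmetric] using assms(2-4) by (simp add: field_simps power2_eq_square)

lemma sum_balancing_weight:
  assumes "1 \<le> k" and "1 \<le> l"
  shows "(\<Sum>i<k + l. balancing_weight m k l i) = 2 * sqrt m - delta m k - delta m l"
  using assms by (simp add: sum_lessThan_add_split balancing_weight_def)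

lemma mub_etf_balanced_columns:
  fixes v w :: "nat \<Rightarrow> real ^ 'm::finite"
  assumes etf_v: "is_ETF k v" and etf_w: "is_ETF l w"
    and unbiased: "\<And>i i'. i < k \<Longrightarrow> i' < l \<Longrightarrow> \<bar>v i \<bullet> w i'\<bar> = 1 / sqrt CARD('m)"
    and "1 \<le> k" and "1 \<le> l" and j: "j < k + l"
  defines "a \<equiv> concat_frame k v w"
  shows "(\<Sum>i<k + l. (balancing_weight CARD('m) k l i * sgn (a i \<bullet> a j)) *\<^sub>R a i)
    = ((CARD('m) - delta CARD('m) k * delta CARD('m) l) / CARD('m)) *\<^sub>R a j"
proof -
  define s where "s = sqrt CARD('m)"
  define dk where "dk = delta CARD('m) k"
  define dl where "dl = delta CARD('m) l"
  have s: "s\<^sup>2 = CARD('m)" "0 < s"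
    by (simp_all add: s_def)
  show ?thesis
  proof (cases "j < k")
    case True
    have "(\<Sum>i<k + l. (balancing_weight CARD('m) k l i * sgn (a i \<bullet> a j)) *\<^sub>R a i)
        = (\<Sum>i<k. ((s - dl) / k * sgn (v i \<bullet> v j)) *\<^sub>R v i)
          + (\<Sum>i<l. ((s - dk) / l * sgn (w i \<bullet> v j)) *\<^sub>R w i)"
      using True by (simp add: sum_lessThan_add_split a_def concat_frame_def balancing_weight_def s_def dk_def dl_def)
    also have "\<dots> = ((s - dl) / k * (k * dk / CARD('m)) + (s - dk) / l * (l / s)) *\<^sub>R v j"
      unfolding dk_def dl_def s_def by (rule etf_pair_sgn_column[OF etf_v etf_w unbiased True])
    also have "(s - dl) / k * (k * dk / CARD('m)) + (s - dk) / l * (l / s) = (CARD('m) - dk * dl) / CARD('m)"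
      using s assms(4,5) by (intro balanced_coefficient) simp_all
    finally show ?thesis
      using True by (simp add: a_def concat_frame_def dk_def dl_def)
  next
    case False
    define j' where "j' = j - k"
    have j': "j = k + j'" "j' < l"
      using False j by (simp_all add: j'_def)
    have "(\<Sum>i<k + l. (balancing_weight CARD('m) k l i * sgn (a i \<bullet> a j)) *\<^sub>R a i)
        = (\<Sum>i<l. ((s - dk) / l * sgn (w i \<bullet> w j')) *\<^sub>R w i)
          + (\<Sum>i<k. ((s - dl) / k * sgn (v i \<bullet> w j')) *\<^sub>R v i)"
      using j' by (simp add: sum_lessThan_add_split a_def concat_frame_def balancing_weight_def
          s_def dk_def dl_def add.commute)
    also have "\<dots> = ((s - dk) / l * (l * dl / CARD('m)) + (s - dl) / k * (k / s)) *\<^sub>R w j'"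
      unfolding dk_def dl_def s_def
      by (rule etf_pair_sgn_column[OF etf_w etf_v _ j'(2)]) (simp add: unbiased inner_commute)
    also have "(s - dk) / l * (l * dl / CARD('m)) + (s - dl) / k * (k / s) = (CARD('m) - dl * dk) / CARD('m)"
      using s assms(4,5) by (intro balanced_coefficient) simp_all
    finally show ?thesis
      using j' by (simp add: a_def concat_frame_def dk_def dl_def mult.commute)
  qed
qed

lemma mub_etf_projection_bound:
  fixes v w :: "nat \<Rightarrow> real ^ 'm::finite"
  assumes etf_v: "is_ETF k v" and etf_w: "is_ETF l w" and mub: "mutually_unbiased k v l w"
    and "1 \<le> k" and "1 \<le> l"
    and proj: "is_projection (k + l) (range (analysis_op (k + l) (concat_frame k v w))) P"
  shows "real CARD('m) - delta CARD('m) k * delta CARD('m) l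
    \<le> opnorm_inf (k + l) P * (2 * sqrt CARD('m) - delta CARD('m) k - delta CARD('m) l)"
proof -
  let ?a = "concat_frame k v w"
  let ?weight = "balancing_weight CARD('m) k l"
  have inj: "inj (analysis_op (k + l) ?a)"
    using etf_prefix_analysis_op_inj[OF etf_v \<open>1 \<le> k\<close>] by (simp add: concat_frame_def)
  have "0 \<le> ?weight i" for i
    using etf_delta_le_sqrt[OF etf_v \<open>1 \<le> k\<close>] etf_delta_le_sqrt[OF etf_w \<open>1 \<le> l\<close>]
    by (simp add: balancing_weight_def)
  then have bound: "\<bar>?weight i * sgn (?a i \<bullet> ?a j)\<bar> \<le> ?weight i" for i j
    by (simp add: abs_mult abs_sgn_eq)
  have unbiased: "\<And>i i'. i < k \<Longrightarrow> i' < l \<Longrightarrow> \<bar>v i \<bullet> w i'\<bar> = 1 / sqrt CARD('m)"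
    using mutually_unbiased_inner[OF etf_v etf_w mub \<open>1 \<le> k\<close> \<open>1 \<le> l\<close>] by blast
  have "(CARD('m) - delta CARD('m) k * delta CARD('m) l) / CARD('m) * DIM(real ^ 'm)
      \<le> opnorm_inf (k + l) P * (\<Sum>i<k + l. ?weight i)"
    using projection_norm_lower_bound[OF inj proj bound
        mub_etf_balanced_columns[OF etf_v etf_w unbiased \<open>1 \<le> k\<close> \<open>1 \<le> l\<close>]] .
  then show ?thesis
    using sum_balancing_weight[OF \<open>1 \<le> k\<close> \<open>1 \<le> l\<close>] by simp
qed

theorem theorem3:
  fixes v w :: "nat \<Rightarrow> real ^ 'm" and k l :: nat
  assumes "CARD('m) \<ge> 2" and "k \<ge> 1" and "l \<ge> 1"
    and "is_ETF k v" and "is_ETF l w"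
    and "mutually_unbiased k v l w"
  shows "max_rel_proj_const CARD('m) (k + l) \<ge>
    (real CARD('m) - delta CARD('m) k * delta CARD('m) l) /
    (2 * sqrt (real CARD('m)) - delta CARD('m) k - delta CARD('m) l)"
proof -
  \<comment> \<open>\<open>CARD('m) \<ge> 2\<close> only makes the denominator positive; where it vanishes, the
    right-hand side is \<open>0\<close> because \<open>x / 0 = 0\<close>.\<close>
  let ?Y = "range (analysis_op (k + l) (concat_frame k v w))"
  let ?gap = "2 * sqrt (real CARD('m)) - delta CARD('m) k - delta CARD('m) l"
  have inj: "inj (analysis_op (k + l) (concat_frame k v w))"
    using etf_prefix_analysis_op_inj[OF assms(4,2)] by (simp add: concat_frame_def)
  have "0 \<le> ?gap"
    using etf_delta_le_sqrt[OF assms(4,2)] etf_delta_le_sqrt[OF assms(5,3)] by simp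
  have "(real CARD('m) - delta CARD('m) k * delta CARD('m) l) / ?gap \<le> rel_proj_const (k + l) ?Y"
  proof (rule le_rel_proj_const)
    show "\<exists>P. is_projection (k + l) ?Y P"
      using analysis_range_projection[OF inj] by metis
    fix P
    assume "is_projection (k + l) ?Y P"
    then have "real CARD('m) - delta CARD('m) k * delta CARD('m) l \<le> opnorm_inf (k + l) P * ?gap"
      by (rule mub_etf_projection_bound[OF assms(4-6,2,3)])
    with \<open>0 \<le> ?gap\<close> opnorm_inf_nonneg[of "k + l" P]
    show "(real CARD('m) - delta CARD('m) k * delta CARD('m) l) / ?gap \<le> opnorm_inf (k + l) P"
      by (cases "?gap = 0") (simp_all add: divide_le_eq)
  qed
  also have "\<dots> \<le> max_rel_proj_const CARD('m) (k + l)"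
    using inj by (intro rel_proj_const_le_max_rel_proj_const) (auto simp: is_subspace_dim_iff_analysis_range)
  finally show ?thesis .
qed

end
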